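(* Let $j\in\mathbb Z_{\ge1}$. Then $$\sum_{m=0}^{j} i(i-1)\cdots(i-m+1)\,\frac{2^{2m}}{(2m)!}\,\frac{1}{(j-m)!}=0$$ for every $i=-l-\frac12$ with $l\in\{0,1,\dots,j-1\}$ (the product $i(i-1)\cdots(i-m+1)$ being $1$ for $m=0$). *)

theory Defs
  imports Complex_Main
begin

end

theory Submission
  imports Defs "HOL-Computational_Algebra.Polynomial"
begin

text \<open>
  For \<open>i = -l - 1/2\<close> the falling factorial \<open>i(i-1)\<cdots>(i-m+1)\<close> is \<open>(-1)^m (l+1/2)\<^sub>m\<close>
  (Pochhammer symbol), and \<open>(2m)! = 4^m (1/2)\<^sub>m m!\<close>. Hence the \<open>m\<close>-th summand equals
  \<open>(-1)^m (j choose m) (m+1/2)\<^sub>l / (j! (1/2)\<^sub>l)\<close>, and the sum is, up to a constant factor,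
  the \<open>j\<close>-th finite difference of the polynomial \<open>x \<mapsto> (x+1/2)\<^sub>l\<close> of degree \<open>l < j\<close>,
  which vanishes.
\<close>

lemma prod_diff_of_nat_eq_pochhammer:
  fixes x :: "'a::comm_ring_1"
  shows "(\<Prod>k<m. x - of_nat k) = (-1) ^ m * pochhammer (- x) m"
  by (induction m) (simp_all add: pochhammer_rec' algebra_simps)

lemma pochhammer_shift_swap:
  fixes a :: "'a::comm_semiring_1"
  shows "pochhammer (a + of_nat l) m * pochhammer a l = pochhammer a m * pochhammer (a + of_nat m) l"
  using pochhammer_product'[of a l m] pochhammer_product'[of a m l]
  by (simp add: add.commute mult.commute)

lemma half_integer_falling_factorial:
  fixes l m :: nat
  shows "(\<Prod>k<m. - real l - 1/2 - real k) * (2 ^ (2*m) / fact (2*m))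
       = (-1) ^ m * pochhammer (real m + 1/2) l / (fact m * pochhammer (1/2) l)"
proof -
  have falling: "(\<Prod>k<m. - real l - 1/2 - real k) = (-1) ^ m * pochhammer (1/2 + real l) m"
    using prod_diff_of_nat_eq_pochhammer[of "- real l - 1/2" m] by (simp add: add.commute)
  have "pochhammer (1/2 + real l) m * pochhammer (1/2) l = pochhammer (1/2) m * pochhammer (real m + 1/2) l"
    using pochhammer_shift_swap[of "1/2 :: real" l m] by (simp add: add.commute)
  moreover have "pochhammer (1/2 :: real) k \<noteq> 0" for k
    by (simp add: pochhammer_eq_0_iff)
  ultimately show ?thesis
    unfolding falling fact_double[where 'a = real]
    by (simp add: divide_simps)
qed

lemma alternating_choose_sum_Suc:
  fixes f :: "nat \<Rightarrow> 'a::comm_ring_1"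
  shows "(\<Sum>m\<le>Suc j. (-1) ^ m * of_nat (Suc j choose m) * f m)
       = (\<Sum>m\<le>j. (-1) ^ m * of_nat (j choose m) * (f m - f (Suc m)))"
proof -
  have "(\<Sum>m\<le>j. (-1) ^ m * of_nat (j choose m) * f m)
      = (\<Sum>m\<le>Suc j. (-1) ^ m * of_nat (j choose m) * f m)"
    by (simp add: binomial_eq_0)
  also have "\<dots> = f 0 + (\<Sum>m\<le>j. (-1) ^ Suc m * of_nat (j choose Suc m) * f (Suc m))"
    by (subst sum.atMost_Suc_shift) simp
  finally have shifted: "(\<Sum>m\<le>j. (-1) ^ m * of_nat (j choose m) * f m)
      = f 0 + (\<Sum>m\<le>j. (-1) ^ Suc m * of_nat (j choose Suc m) * f (Suc m))" .
  have "(\<Sum>m\<le>Suc j. (-1) ^ m * of_nat (Suc j choose m) * f m)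
      = f 0 + (\<Sum>m\<le>j. (-1) ^ Suc m * of_nat (j choose m) * f (Suc m))
            + (\<Sum>m\<le>j. (-1) ^ Suc m * of_nat (j choose Suc m) * f (Suc m))"
    by (subst sum.atMost_Suc_shift) (simp add: sum.distrib[symmetric] algebra_simps)
  also have "\<dots> = (\<Sum>m\<le>j. (-1) ^ Suc m * of_nat (j choose m) * f (Suc m))
            + (\<Sum>m\<le>j. (-1) ^ m * of_nat (j choose m) * f m)"
    using shifted by simp
  also have "\<dots> = (\<Sum>m\<le>j. (-1) ^ m * of_nat (j choose m) * (f m - f (Suc m)))"
    by (simp add: sum.distrib[symmetric] algebra_simps)
  finally show ?thesis .
qed

lemma degree_diff_pcompose_shift_less:
  fixes p :: "'a::idom poly"
  shows "p - p \<circ>\<^sub>p [:c, 1:] = 0 \<or> degree (p - p \<circ>\<^sub>p [:c, 1:]) < degree p"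
proof (cases "degree p = 0")
  case True
  then show ?thesis
    by (metis degree_eq_zeroE pcompose_const diff_self)
next
  case False
  let ?q = "p - p \<circ>\<^sub>p [:c, 1:]"
  have same_degree: "degree (p \<circ>\<^sub>p [:c, 1:]) = degree p"
    by (simp add: degree_pcompose)
  have "coeff ?q (degree p) = 0"
    using lead_coeff_comp[of "[:c, 1:]" p] same_degree by simp
  moreover have "degree ?q \<le> degree p"
    using degree_diff_le[of p "degree p"] same_degree by simp
  ultimately show ?thesis
    by (metis le_neq_implies_less leading_coeff_0_iff)
qed

lemma alternating_choose_sum_poly_eq_0:
  fixes p :: "'a::idom poly"
  assumes "degree p < j"
  shows "(\<Sum>m\<le>j. (-1) ^ m * of_nat (j choose m) * poly p (of_nat m)) = 0"
  using assms
proof (induction j arbitrary: p)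
  case 0
  then show ?case by simp
next
  case (Suc j)
  define q where "q = p - p \<circ>\<^sub>p [:1, 1:]"
  have "(\<Sum>m\<le>Suc j. (-1) ^ m * of_nat (Suc j choose m) * poly p (of_nat m))
      = (\<Sum>m\<le>j. (-1) ^ m * of_nat (j choose m) * poly q (of_nat m))"
    unfolding alternating_choose_sum_Suc q_def by (simp add: poly_pcompose algebra_simps)
  also have "\<dots> = 0"
  proof -
    have "q = 0 \<or> degree q < j"
      using degree_diff_pcompose_shift_less[of p 1] Suc.prems unfolding q_def by auto
    then show ?thesis
      using Suc.IH by auto
  qed
  finally show ?case .
qed

lemma pochhammer_polynomial:
  fixes a :: "'a::idom"
  obtains p where "degree p = n" and "\<And>x. poly p x = pochhammer (x + a) n"
proof
  show "degree (\<Prod>k<n. [:a + of_nat k, 1:]) = n"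
    by (subst degree_prod_sum_eq) auto
  show "poly (\<Prod>k<n. [:a + of_nat k, 1:]) x = pochhammer (x + a) n" for x
    by (simp add: poly_prod pochhammer_prod atLeast0LessThan algebra_simps)
qed

theorem lemma3p12:
  fixes j l :: nat and i :: real
  assumes "j \<ge> 1" and "l \<le> j - 1" and "i = - real l - 1/2"
  shows "(\<Sum>m=0..j. (\<Prod>k<m. (i - real k)) * (2 ^ (2*m) / fact (2*m)) * (1 / fact (j - m))) = 0"
proof -
  obtain p :: "real poly" where deg: "degree p = l" and poly_p: "\<And>x. poly p x = pochhammer (x + 1/2) l"
    using pochhammer_polynomial[where a = "1/2" and n = l] by blast
  define c where "c = 1 / (fact j * pochhammer (1/2 :: real) l)"
  have summand: "(\<Prod>k<m. (i - real k)) * (2 ^ (2*m) / fact (2*m)) * (1 / fact (j - m))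
      = c * ((-1) ^ m * of_nat (j choose m) * poly p (of_nat m))" if "m \<le> j" for m
  proof -
    have "(\<Prod>k<m. (i - real k)) * (2 ^ (2*m) / fact (2*m))
        = (-1) ^ m * poly p (real m) / (fact m * pochhammer (1/2) l)"
      using half_integer_falling_factorial[of l m] by (simp add: assms(3) poly_p)
    then show ?thesis
      by (simp add: c_def binomial_fact[OF that] field_simps)
  qed
  have "(\<Sum>m=0..j. (\<Prod>k<m. (i - real k)) * (2 ^ (2*m) / fact (2*m)) * (1 / fact (j - m)))
      = c * (\<Sum>m\<le>j. (-1) ^ m * of_nat (j choose m) * poly p (of_nat m))"
    unfolding atLeast0AtMost sum_distrib_left by (rule sum.cong) (simp_all only: atMost_iff summand)
  also have "\<dots> = 0"
    using alternating_choose_sum_poly_eq_0[of p j] deg assms(1,2) by simp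
  finally show ?thesis .
qed

end
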